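(* Let $V$ be a finite vocabulary. Each word $x\in V$ has a synonym set $S_x\subseteq V$ with $x\in S_x$, the synonym relation being symmetric, and a nonempty perturbation set $P_x\subseteq V$. Fix integers $L\ge1$, $0\le R\le L$ and a finite label set $\mathcal{Y}$ with $|\mathcal{Y}|\ge2$. For $X=x_1,\ldots,x_L\in V^L$ let $S_X=\{X'\in V^L: \sum_i\mathbb{I}\{x'_i\ne x_i\}\le R,\ x'_i\in S_{x_i}\ \forall i\}$ and $\Pi_X(Z)=\prod_{i=1}^L\mathbb{I}\{z_i\in P_{x_i}\}/|P_{x_i}|$. For a classifier $h:V^L\to\mathcal{Y}$ write $g^{\mathrm{RS}}_h(X,c)=\mathbb{P}_{Z\sim\Pi_X}(h(Z)=c)$ and $h^{\mathrm{RS}}(X)=\arg\max_c g^{\mathrm{RS}}_h(X,c)$. Assume $|P_x|=|P_{x'}|$ for every word $x$ and every $x'\in S_x$. Let $q_x=\min_{x'\in S_x}|P_x\cap P_{x'}|/|P_x|$, and for a sentence $X$ order its positions $i_1,\ldots,i_L$ so that $q_{x_{i_1}}\le\cdots\le q_{x_{i_L}}$ and put $q_X=1-\prod_{j=1}^R q_{x_{i_j}}$. Let $f:V^L\to\mathcal{Y}$ be a classifier and $X\in V^L$ a sentence with $f^{\mathrm{RS}}(X)=y$, and let $y_B=\arg\max_{c\ne y}g^{\mathrm{RS}}_f(X,c)$. Then there exists a classifier $f_*:V^L\to\mathcal{Y}$ such that $g^{\mathrm{RS}}_{f_*}(X,c)=g^{\mathrm{RS}}_f(X,c)$ for $c\in\{y,y_B\}$,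 and $$\min_{X'\in S_X}g^{\mathrm{RS}}_{f_*}(X',y)=\max\big(g^{\mathrm{RS}}_{f_*}(X,y)-q_X,0\big),\qquad \max_{X'\in S_X}g^{\mathrm{RS}}_{f_*}(X',y_B)=\min\big(g^{\mathrm{RS}}_{f_*}(X,y_B)+q_X,1\big).$$
   Context: This expresses that the bounds $g^{\mathrm{RS}}(X,c)\pm q_X$ on the smoothed soft scores over adversarial sentences $X'\in S_X$ cannot be improved using only the values $g^{\mathrm{RS}}(X,y)$ and $g^{\mathrm{RS}}(X,y_B)$. *)

theory Defs
  imports Complex_Main
begin

text \<open>Vocabulary V = UNIV of a finite type 'w; sentences in V^L are lists of length L;
labels form a finite type 'y.  S: synonym sets, P: perturbation sets.\<close>

definition sentences :: "nat \<Rightarrow> 'w list set" where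
  "sentences L = {Z. length Z = L}"

definition adv_set :: "('w \<Rightarrow> 'w set) \<Rightarrow> nat \<Rightarrow> nat \<Rightarrow> 'w list \<Rightarrow> 'w list set" where
  "adv_set S L R X = {X'. length X' = L \<and> card {i. i < L \<and> X' ! i \<noteq> X ! i} \<le> R
                          \<and> (\<forall>i<L. X' ! i \<in> S (X ! i))}"

definition smooth_dist :: "('w \<Rightarrow> 'w set) \<Rightarrow> nat \<Rightarrow> 'w list \<Rightarrow> 'w list \<Rightarrow> real" where
  "smooth_dist P L X Z = (\<Prod>i<L. of_bool (Z ! i \<in> P (X ! i)) / real (card (P (X ! i))))"

definition g_RS :: "('w \<Rightarrow> 'w set) \<Rightarrow> nat \<Rightarrow> ('w list \<Rightarrow> 'y) \<Rightarrow> 'w list \<Rightarrow> 'y \<Rightarrow> real" where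
  "g_RS P L h X c = (\<Sum>Z\<in>sentences L. smooth_dist P L X Z * of_bool (h Z = c))"

definition q_word :: "('w \<Rightarrow> 'w set) \<Rightarrow> ('w \<Rightarrow> 'w set) \<Rightarrow> 'w \<Rightarrow> real" where
  "q_word S P x = Min ((\<lambda>x'. real (card (P x \<inter> P x')) / real (card (P x))) ` S x)"

definition q_sent :: "('w \<Rightarrow> 'w set) \<Rightarrow> ('w \<Rightarrow> 'w set) \<Rightarrow> nat \<Rightarrow> 'w list \<Rightarrow> real" where
  "q_sent S P R X = 1 - prod_list (take R (sort (map (q_word S P) X)))"

end

(* Pi_X is the uniform distribution on the box B_X = P(x_1) x ... x P(x_L), so g(X,c) is the
   fraction of B_X that the classifier labels c.  For X' in S_X the boxes B_X and B_X' have the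
   same size and share the fraction prod_i |P(x_i) intersect P(x'_i)| / |P(x_i)| of their points;
   at most R factors differ from 1 and each is at least q(x_i), so the shared fraction is at least
   1 - q_X and no score moves by more than q_X.
   Both bounds are attained at the same X*: replace the R words with the smallest q by their least
   overlapping synonyms, so that B_X and B_X* share exactly the fraction 1 - q_X, and permute the
   labels of f inside B_X so that y avoids the shared part while y_B fills it (labelling B_X* - B_X
   by y_B).  This keeps g(X,y) and g(X,y_B) and moves both by the full q_X at X*. *)

theory Submission
  imports Defs "HOL-Library.Multiset" "HOL-Library.FuncSet"
begin

definition box :: "(nat \<Rightarrow> 'a set) \<Rightarrow> nat \<Rightarrow> 'a list set" where
  "box F n = {Z. length Z = n \<and> (\<forall>i<n. Z ! i \<in> F i)}"

lemma bij_betw_box_PiE: "bij_betw (\<lambda>Z. restrict (nth Z) {..<n}) (box F n) (PiE {..<n} F)"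
proof (rule bij_betw_byWitness[where f' = "\<lambda>g. map g [0..<n]"])
  show "\<forall>Z\<in>box F n. map (restrict (nth Z) {..<n}) [0..<n] = Z"
    by (auto simp: box_def intro: nth_equalityI)
  show "\<forall>g\<in>PiE {..<n} F. restrict (nth (map g [0..<n])) {..<n} = g"
    by (auto simp: PiE_def extensional_def)
  show "(\<lambda>Z. restrict (nth Z) {..<n}) ` box F n \<subseteq> PiE {..<n} F"
  proof (rule image_subsetI)
    fix Z assume "Z \<in> box F n"
    then show "restrict (nth Z) {..<n} \<in> PiE {..<n} F"
      by (simp add: box_def restrict_PiE_iff)
  qed
  show "(\<lambda>g. map g [0..<n]) ` PiE {..<n} F \<subseteq> box F n"
  proof (rule image_subsetI)
    fix g assume "g \<in> PiE {..<n} F"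
    then show "map g [0..<n] \<in> box F n"
      by (simp add: box_def PiE_mem)
  qed
qed

lemma card_box: "card (box F n) = (\<Prod>i<n. card (F i))"
  using bij_betw_same_card[OF bij_betw_box_PiE] by (simp add: card_PiE)

lemma box_Int: "box F n \<inter> box G n = box (\<lambda>i. F i \<inter> G i) n"
  by (auto simp: box_def)

lemma box_subset_sentences: "box F n \<subseteq> sentences n"
  by (auto simp: box_def sentences_def)

lemma finite_sentences: "finite (sentences n :: 'a::finite list set)"
  using finite_lists_length_eq[of "UNIV :: 'a set" n] by (simp add: sentences_def)

lemma finite_box: "finite (box F n :: 'a::finite list set)"
  using box_subset_sentences finite_sentences by (rule finite_subset)

lemma card_bij_betw_preimage:
  assumes "bij_betw \<sigma> A B"
  shows "card {Z \<in> A. p (\<sigma> Z)} = card {Z \<in> B. p Z}"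
proof -
  have "\<sigma> ` {Z \<in> A. p (\<sigma> Z)} = {Z \<in> B. p Z}"
    using assms by (auto simp: bij_betw_def)
  moreover have "inj_on \<sigma> {Z \<in> A. p (\<sigma> Z)}"
    using assms by (auto simp: bij_betw_def intro: inj_on_subset)
  ultimately show ?thesis
    by (metis card_image)
qed

lemma obtain_permutation_image_eq:
  assumes "finite B" "C \<subseteq> B" "T \<subseteq> B" "card C = card T"
  obtains \<sigma> where "bij_betw \<sigma> B B" "\<sigma> ` C = T"
proof -
  have fin: "finite C" "finite T" "finite (B - C)" "finite (B - T)"
    using assms finite_subset by auto
  obtain \<phi> where \<phi>: "bij_betw \<phi> C T"
    using finite_same_card_bij fin assms(4) by blast
  have "card (B - C) = card (B - T)"
    using assms by (simp add: card_Diff_subset fin)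
  then obtain \<psi> where \<psi>: "bij_betw \<psi> (B - C) (B - T)"
    using finite_same_card_bij fin by blast
  have "bij_betw (\<lambda>Z. if Z \<in> C then \<phi> Z else \<psi> Z) (C \<union> (B - C)) (T \<union> (B - T))"
    using \<phi> \<psi> by (intro bij_betw_disjoint_Un) auto
  moreover have "C \<union> (B - C) = B" "T \<union> (B - T) = B"
    using assms by auto
  moreover have "(\<lambda>Z. if Z \<in> C then \<phi> Z else \<psi> Z) ` C = T"
    using \<phi> by (simp add: bij_betw_def)
  ultimately show ?thesis
    using that by metis
qed

lemma obtain_subset_with_card_Int:
  assumes "finite B" "Y \<subseteq> B" "W \<subseteq> B" "Y \<inter> W = {}"
    and "p \<le> card Y" "r \<le> card W" "p + r \<le> t" "t - (p + r) \<le> card (B - (Y \<union> W))"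
  obtains T where "T \<subseteq> B" "card T = t" "card (T \<inter> Y) = p" "card (T \<inter> W) = r"
proof -
  obtain Y' where Y': "Y' \<subseteq> Y" "card Y' = p" "finite Y'"
    using obtain_subset_with_card_n assms(5) by metis
  obtain W' where W': "W' \<subseteq> W" "card W' = r" "finite W'"
    using obtain_subset_with_card_n assms(6) by metis
  obtain O' where O': "O' \<subseteq> B - (Y \<union> W)" "card O' = t - (p + r)" "finite O'"
    using obtain_subset_with_card_n assms(8) by metis
  define T where "T = Y' \<union> W' \<union> O'"
  have "card (Y' \<union> W') = card Y' + card W'"
    using Y' W' assms(4) by (intro card_Un_disjoint) auto
  then have "card T = card Y' + card W' + card O'"
    unfolding T_def using Y' W' O' by (subst card_Un_disjoint) auto
  moreover have "T \<inter> Y = Y'" "T \<inter> W = W'"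
    using Y' W' O' assms(4) by (auto simp: T_def)
  moreover have "T \<subseteq> B"
    using Y' W' O' assms(2,3) by (auto simp: T_def)
  ultimately show ?thesis
    using that Y'(2) W'(2) O'(2) assms(7) by simp
qed

lemma card_filter_le_add_card_Diff:
  assumes "finite B" "finite B'"
  shows "card {Z \<in> B. p Z} \<le> card {Z \<in> B'. p Z} + card (B - B')"
proof -
  have "card {Z \<in> B. p Z} \<le> card ({Z \<in> B'. p Z} \<union> (B - B'))"
    using assms by (intro card_mono) auto
  also have "\<dots> \<le> card {Z \<in> B'. p Z} + card (B - B')"
    by (rule card_Un_le)
  finally show ?thesis .
qed

lemma obtain_subset_extremal_label_counts:
  fixes f :: "'a \<Rightarrow> 'b"
  assumes B: "finite B" "C \<subseteq> B" and "y \<noteq> yB"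
  obtains T where "T \<subseteq> B" "card T = card C"
    "card {Z \<in> T. f Z = y} = card {Z \<in> B. f Z = y} - card (B - C)"
    "card {Z \<in> T. f Z = yB} = min (card {Z \<in> B. f Z = yB}) (card C)"
proof -
  define Y where "Y = {Z \<in> B. f Z = y}"
  define W where "W = {Z \<in> B. f Z = yB}"
  have Y_W: "Y \<subseteq> B" "W \<subseteq> B" "Y \<inter> W = {}"
    using \<open>y \<noteq> yB\<close> by (auto simp: Y_def W_def)
  have card_YW: "card (Y \<union> W) = card Y + card W"
    using Y_W B(1) finite_subset by (intro card_Un_disjoint) auto
  have card_rest: "card (B - (Y \<union> W)) = card B - (card Y + card W)"
    using Y_W B(1) card_YW by (simp add: card_Diff_subset finite_subset)
  have "card B = card (B - C) + card C"
    using B card_mono[OF B] by (simp add: card_Diff_subset finite_subset)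
  moreover have "card Y + card W \<le> card B"
    using Y_W B(1) card_YW card_mono[of B "Y \<union> W"] by simp
  ultimately have "card Y - card (B - C) + min (card W) (card C) \<le> card C"
    and "card C - (card Y - card (B - C) + min (card W) (card C)) \<le> card (B - (Y \<union> W))"
    using card_rest by linarith+
  then obtain T where T: "T \<subseteq> B" "card T = card C"
    "card (T \<inter> Y) = card Y - card (B - C)" "card (T \<inter> W) = min (card W) (card C)"
    using obtain_subset_with_card_Int[OF B(1) Y_W, of "card Y - card (B - C)" "min (card W) (card C)"]
    by auto
  moreover have "{Z \<in> T. f Z = y} = T \<inter> Y" "{Z \<in> T. f Z = yB} = T \<inter> W"
    using T(1) by (auto simp: Y_def W_def)
  ultimately show ?thesis
    using that by (simp add: Y_def W_def)
qed

(* fs is f composed with a permutation of B that pushes the label y out of B intersect B' and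
   pulls yB into it; outside B it is constantly yB. *)
lemma obtain_worst_case_relabelling:
  fixes f :: "'a \<Rightarrow> 'b"
  assumes B: "finite B" "finite B'" "card B = card B'" and "y \<noteq> yB"
  obtains fs where
    "card {Z \<in> B. fs Z = y} = card {Z \<in> B. f Z = y}"
    "card {Z \<in> B. fs Z = yB} = card {Z \<in> B. f Z = yB}"
    "card {Z \<in> B'. fs Z = y} = card {Z \<in> B. f Z = y} - card (B - B')"
    "card {Z \<in> B'. fs Z = yB} = min (card {Z \<in> B. f Z = yB}) (card (B \<inter> B')) + card (B - B')"
proof -
  obtain T where T: "T \<subseteq> B" "card T = card (B \<inter> B')"
    "card {Z \<in> T. f Z = y} = card {Z \<in> B. f Z = y} - card (B - (B \<inter> B'))"
    "card {Z \<in> T. f Z = yB} = min (card {Z \<in> B. f Z = yB}) (card (B \<inter> B'))"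
    using obtain_subset_extremal_label_counts[OF B(1) Int_lower1 \<open>y \<noteq> yB\<close>] by blast
  obtain \<sigma> where \<sigma>: "bij_betw \<sigma> B B" "\<sigma> ` (B \<inter> B') = T"
    using obtain_permutation_image_eq[OF B(1) Int_lower1 T(1) T(2)[symmetric]] by blast
  then have \<sigma>_C: "bij_betw \<sigma> (B \<inter> B') T"
    by (meson bij_betw_subset inf_le1)
  define fs where "fs Z = (if Z \<in> B then f (\<sigma> Z) else yB)" for Z
  have "{Z \<in> B. fs Z = v} = {Z \<in> B. f (\<sigma> Z) = v}" for v
    by (auto simp: fs_def)
  then have on_B: "card {Z \<in> B. fs Z = v} = card {Z \<in> B. f Z = v}" for v
    using card_bij_betw_preimage[OF \<sigma>(1), of "\<lambda>Z. f Z = v"] by simp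
  have "{Z \<in> B'. fs Z = y} = {Z \<in> B \<inter> B'. f (\<sigma> Z) = y}"
    using \<open>y \<noteq> yB\<close> by (auto simp: fs_def)
  then have y_on_B': "card {Z \<in> B'. fs Z = y} = card {Z \<in> T. f Z = y}"
    using card_bij_betw_preimage[OF \<sigma>_C, of "\<lambda>Z. f Z = y"] by simp
  have "{Z \<in> B'. fs Z = yB} = {Z \<in> B \<inter> B'. f (\<sigma> Z) = yB} \<union> (B' - B)"
    by (auto simp: fs_def)
  moreover have "card ({Z \<in> B \<inter> B'. f (\<sigma> Z) = yB} \<union> (B' - B))
      = card {Z \<in> B \<inter> B'. f (\<sigma> Z) = yB} + card (B' - B)"
    using B by (intro card_Un_disjoint) auto
  ultimately have yB_on_B': "card {Z \<in> B'. fs Z = yB} = card {Z \<in> T. f Z = yB} + card (B' - B)"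
    using card_bij_betw_preimage[OF \<sigma>_C, of "\<lambda>Z. f Z = yB"] by simp
  have "card (B' - B) = card (B - B')" "B - (B \<inter> B') = B - B'"
    using B by (auto simp: card_Diff_subset_Int Int_commute)
  then show ?thesis
    using that[OF on_B on_B] y_on_B' yB_on_B' T(3,4) by simp
qed

lemma prod_list_unit_interval:
  fixes s :: "real list"
  assumes "set s \<subseteq> {0..1}"
  shows "prod_list s \<in> {0..1}"
  using assms by (induction s) (auto intro: mult_le_one)

lemma prod_list_take_sorted_le_prod_mset:
  fixes s :: "real list"
  assumes "sorted s" "set s \<subseteq> {0..1}" "M \<subseteq># mset s" "size M \<le> R"
  shows "prod_list (take R s) \<le> prod_mset M"
  using assms
proof (induction s arbitrary: M R)
  case (Cons a s)
  show ?case
  proof (cases "M = {#}")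
    case True
    then show ?thesis
      using prod_list_unit_interval[of "take R (a # s)"] Cons.prems(2) set_take_subset by fastforce
  next
    case False
    then obtain R' where R: "R = Suc R'"
      using Cons.prems(4) by (cases R) auto
    define b where "b = (if a \<in># M then a else (SOME b. b \<in># M))"
    have b: "b \<in># M"
      using False by (simp add: b_def some_in_eq)
    have "a \<le> b"
      using b Cons.prems(1,3) mset_subset_eqD by (fastforce simp: b_def)
    have "M - {#a#} \<subseteq># mset s"
      using Cons.prems(3) by (simp add: subset_eq_diff_conv)
    then have "M - {#b#} \<subseteq># mset s"
      by (metis b_def diff_single_trivial diff_subset_eq_self subset_mset.order_trans)
    then have IH: "prod_list (take R' s) \<le> prod_mset (M - {#b#})"
      using Cons R b by (intro Cons.IH) (auto simp: size_Diff_submset)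
    have "a * prod_list (take R' s) \<le> b * prod_mset (M - {#b#})"
      using IH \<open>a \<le> b\<close> Cons.prems(2) prod_list_unit_interval[of "take R' s"] set_take_subset
      by (intro mult_mono) fastforce+
    then show ?thesis
      by (simp add: R prod_mset.remove[OF b])
  qed
qed simp

lemma prod_take_sort_le_prod_subset:
  fixes qs :: "real list"
  assumes "set qs \<subseteq> {0..1}" "J \<subseteq> {..<length qs}" "card J \<le> R"
  shows "prod_list (take R (sort qs)) \<le> (\<Prod>i\<in>J. qs ! i)"
proof -
  have "finite J"
    using assms(2) finite_subset by blast
  have "image_mset (nth qs) (mset_set J) \<subseteq># image_mset (nth qs) (mset_set {..<length qs})"
    using assms(2) by (intro image_mset_subseteq_mono subset_imp_msubset_mset_set) simp_all
  also have "\<dots> = mset (sort qs)"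
    by (metis map_nth mset_map mset_sort mset_upt atLeast0LessThan)
  finally have "prod_list (take R (sort qs)) \<le> prod_mset (image_mset (nth qs) (mset_set J))"
    using assms(1,3) \<open>finite J\<close> by (intro prod_list_take_sorted_le_prod_mset) auto
  then show ?thesis
    by (simp add: prod_unfold_prod_mset)
qed

lemma obtain_subset_prod_eq_prod_take_sort:
  fixes qs :: "'a::{linorder, comm_monoid_mult} list"
  obtains J where "J \<subseteq> {..<length qs}" "card J \<le> R"
    "(\<Prod>i\<in>J. qs ! i) = prod_list (take R (sort qs))"
proof -
  define idx where "idx = sort_key (nth qs) [0..<length qs]"
  have "sort qs = map (nth qs) idx"
  proof (rule properties_for_sort)
    show "mset (map (nth qs) idx) = mset qs"
      by (metis idx_def map_nth mset_map mset_sort)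
    show "sorted (map (nth qs) idx)"
      by (simp add: idx_def)
  qed
  moreover have "distinct idx" "set idx = {..<length qs}"
    by (auto simp: idx_def)
  ultimately show ?thesis
    using that[of "set (take R idx)"]
    by (auto simp: prod.distinct_set_conv_list take_map distinct_card dest: in_set_takeD)
qed

lemma divide_truncated_diff:
  fixes k d :: nat and q N :: real
  assumes "0 < N" "real d = q * N"
  shows "real (k - d) / N = max (k / N - q) 0"
proof -
  have "k / N - q = (real k - real d) / N"
    using assms by (simp add: field_simps)
  then show ?thesis
    using assms(1) by (cases "d \<le> k") (simp_all add: of_nat_diff divide_neg_pos)
qed

lemma divide_saturated_sum:
  fixes m c d :: nat and q N :: real
  assumes "0 < N" "real d = q * N" "real c + real d = N"
  shows "real (min m c + d) / N = min (m / N + q) 1"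
proof -
  have "m / N + q = (real m + real d) / N" "1 = (real c + real d) / N"
    using assms by (simp_all add: field_simps)
  then show ?thesis
    using assms(1) by (cases "m \<le> c") (simp_all add: divide_right_mono min_def)
qed

lemma frequency_shift_bounds:
  fixes u v q N :: real
  assumes "0 < N" "0 \<le> v" "v \<le> N" "u \<le> v + q * N" "v \<le> u + q * N"
  shows "max (u / N - q) 0 \<le> v / N" and "v / N \<le> min (u / N + q) 1"
proof -
  have "u / N - q = (u - q * N) / N" "u / N + q = (u + q * N) / N"
    using assms(1) by (simp_all add: field_simps)
  then show "max (u / N - q) 0 \<le> v / N" and "v / N \<le> min (u / N + q) 1"
    using assms by (simp_all add: divide_right_mono)
qed

definition smooth_support :: "('w \<Rightarrow> 'w set) \<Rightarrow> 'w list \<Rightarrow> 'w list set" where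
  "smooth_support P X = box (\<lambda>i. P (X ! i)) (length X)"

lemma prod_of_bool:
  "finite A \<Longrightarrow> (\<Prod>i\<in>A. of_bool (Q i) :: 'a::comm_semiring_1) = of_bool (\<forall>i\<in>A. Q i)"
  by (induction A rule: finite_induct) auto

lemma finite_smooth_support:
  fixes P :: "'w::finite \<Rightarrow> 'w set"
  shows "finite (smooth_support P X)"
  by (simp add: smooth_support_def finite_box)

lemma finite_adv_set: "finite (adv_set S L R X :: 'w::finite list set)"
  by (rule finite_subset[OF _ finite_sentences[of L]]) (auto simp: adv_set_def sentences_def)

lemma smooth_dist_eq:
  assumes "length X = L" "length Z = L"
  shows "smooth_dist P L X Z = of_bool (Z \<in> smooth_support P X) / card (smooth_support P X)"
proof -
  have "smooth_dist P L X Z = (\<Prod>i<L. of_bool (Z ! i \<in> P (X ! i))) / (\<Prod>i<L. real (card (P (X ! i))))"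
    unfolding smooth_dist_def by (rule prod_dividef)
  moreover have "card (smooth_support P X) = (\<Prod>i<L. card (P (X ! i)))"
    using assms(1) by (simp add: smooth_support_def card_box)
  moreover have "Z \<in> smooth_support P X \<longleftrightarrow> (\<forall>i<L. Z ! i \<in> P (X ! i))"
    using assms by (simp add: smooth_support_def box_def)
  ultimately show ?thesis
    by (auto simp: prod_of_bool)
qed

lemma g_RS_eq_card_div:
  fixes P :: "'w::finite \<Rightarrow> 'w set"
  assumes "length X = L"
  shows "g_RS P L h X c = card {Z \<in> smooth_support P X. h Z = c} / card (smooth_support P X)"
proof -
  have "g_RS P L h X c
      = (\<Sum>Z\<in>sentences L. of_bool (Z \<in> {Z \<in> smooth_support P X. h Z = c})) / card (smooth_support P X)"
    unfolding g_RS_def sum_divide_distrib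
    using assms by (intro sum.cong) (auto simp: smooth_dist_eq sentences_def)
  also have "sentences L \<inter> {Z. Z \<in> {Z \<in> smooth_support P X. h Z = c}}
      = {Z \<in> smooth_support P X. h Z = c}"
    using assms box_subset_sentences by (auto simp: smooth_support_def)
  then have "(\<Sum>Z\<in>sentences L. of_bool (Z \<in> {Z \<in> smooth_support P X. h Z = c}) :: real)
      = card {Z \<in> smooth_support P X. h Z = c}"
    by (simp only: sum_of_bool_eq[OF finite_sentences finite_sentences])
  finally show ?thesis .
qed

definition overlap :: "('w \<Rightarrow> 'w set) \<Rightarrow> 'w \<Rightarrow> 'w \<Rightarrow> real" where
  "overlap P x x' = card (P x \<inter> P x') / card (P x)"

lemma overlap_unit_interval:
  fixes P :: "'w::finite \<Rightarrow> 'w set"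
  shows "overlap P x x' \<in> {0..1}"
  by (cases "P x = {}") (simp_all add: overlap_def divide_le_eq_1 card_mono card_gt_0_iff)

lemma q_word_le_overlap:
  fixes S P :: "'w::finite \<Rightarrow> 'w set"
  assumes "x' \<in> S x"
  shows "q_word S P x \<le> overlap P x x'"
  unfolding q_word_def overlap_def using assms by (intro Min_le) auto

locale perturbation_model =
  fixes S P :: "'w::finite \<Rightarrow> 'w set"
  assumes syn_refl: "\<And>x. x \<in> S x"
    and P_ne: "\<And>x. P x \<noteq> {}"
    and P_card: "\<And>x x'. x' \<in> S x \<Longrightarrow> card (P x) = card (P x')"
begin

lemma card_P_pos: "0 < card (P x)"
  by (meson P_ne card_gt_0_iff finite)

lemma overlap_self: "overlap P x x = 1"
  using P_ne by (simp add: overlap_def)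

lemma obtain_overlap_eq_q_word:
  obtains x' where "x' \<in> S x" "overlap P x x' = q_word S P x"
proof -
  have "q_word S P x \<in> overlap P x ` S x"
    unfolding q_word_def overlap_def using syn_refl by (intro Min_in) auto
  then show ?thesis
    using that by force
qed

lemma q_word_unit_interval: "q_word S P x \<in> {0..1}"
  using overlap_unit_interval by (metis obtain_overlap_eq_q_word)

lemma card_smooth_support_pos: "0 < card (smooth_support P X)"
  using card_P_pos by (simp add: smooth_support_def card_box)

lemma card_smooth_support_eq:
  assumes "length X' = length X" "\<forall>i<length X. X' ! i \<in> S (X ! i)"
  shows "card (smooth_support P X') = card (smooth_support P X)"
proof -
  have "card (P (X' ! i)) = card (P (X ! i))" if "i < length X" for i
    using assms(2) that P_card by metis
  then show ?thesis
    using assms(1) by (simp add: smooth_support_def card_box)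
qed

lemma card_smooth_support_Int:
  assumes "length X' = length X"
  shows "real (card (smooth_support P X \<inter> smooth_support P X'))
    = card (smooth_support P X) * (\<Prod>i<length X. overlap P (X ! i) (X' ! i))"
proof -
  have "real (card (smooth_support P X \<inter> smooth_support P X'))
      = (\<Prod>i<length X. real (card (P (X ! i))) * overlap P (X ! i) (X' ! i))"
    using assms P_ne by (simp add: smooth_support_def box_Int card_box overlap_def)
  then show ?thesis
    by (simp add: prod.distrib smooth_support_def card_box)
qed

lemma prod_overlap_adv_ge:
  assumes "length X = L" "X' \<in> adv_set S L R X"
  shows "1 - q_sent S P R X \<le> (\<Prod>i<L. overlap P (X ! i) (X' ! i))"
proof -
  define J where "J = {i. i < L \<and> X' ! i \<noteq> X ! i}"
  have J: "J \<subseteq> {..<L}" "card J \<le> R"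
    using assms(2) by (auto simp: J_def adv_set_def)
  have "1 - q_sent S P R X = prod_list (take R (sort (map (q_word S P) X)))"
    by (simp add: q_sent_def)
  also have "\<dots> \<le> (\<Prod>i\<in>J. map (q_word S P) X ! i)"
    using J assms(1) q_word_unit_interval by (intro prod_take_sort_le_prod_subset) auto
  also have "\<dots> \<le> (\<Prod>i\<in>J. overlap P (X ! i) (X' ! i))"
    using J assms q_word_unit_interval
    by (intro prod_mono) (auto simp: adv_set_def subset_iff intro!: q_word_le_overlap)
  also have "\<dots> = (\<Prod>i<L. overlap P (X ! i) (X' ! i))"
    using J overlap_self by (intro prod.mono_neutral_left) (auto simp: J_def)
  finally show ?thesis .
qed

lemma obtain_adv_prod_overlap_eq:
  assumes "length X = L"
  obtains X' where "X' \<in> adv_set S L R X"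
    "(\<Prod>i<L. overlap P (X ! i) (X' ! i)) = 1 - q_sent S P R X"
proof -
  obtain J where J: "J \<subseteq> {..<L}" "card J \<le> R"
    "(\<Prod>i\<in>J. map (q_word S P) X ! i) = prod_list (take R (sort (map (q_word S P) X)))"
    using obtain_subset_prod_eq_prod_take_sort assms by (metis length_map)
  define w where "w x = (SOME x'. x' \<in> S x \<and> overlap P x x' = q_word S P x)" for x
  have w: "w x \<in> S x" "overlap P x (w x) = q_word S P x" for x
    using someI_ex[of "\<lambda>x'. x' \<in> S x \<and> overlap P x x' = q_word S P x"]
      obtain_overlap_eq_q_word by (metis w_def)+
  define X' where "X' = map (\<lambda>i. if i \<in> J then w (X ! i) else X ! i) [0..<L]"
  have "{i. i < L \<and> X' ! i \<noteq> X ! i} \<subseteq> J"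
    by (auto simp: X'_def split: if_splits)
  then have "card {i. i < L \<and> X' ! i \<noteq> X ! i} \<le> R"
    using J(1,2) finite_subset card_mono by (metis finite_lessThan le_trans)
  then have "X' \<in> adv_set S L R X"
    using w(1) syn_refl by (simp add: adv_set_def X'_def)
  moreover have "(\<Prod>i<L. overlap P (X ! i) (X' ! i)) = (\<Prod>i\<in>J. map (q_word S P) X ! i)"
  proof -
    have "(\<Prod>i<L. overlap P (X ! i) (X' ! i)) = (\<Prod>i<L. if i \<in> J then q_word S P (X ! i) else 1)"
      using w(2) overlap_self by (intro prod.cong) (auto simp: X'_def)
    also have "\<dots> = (\<Prod>i\<in>J. map (q_word S P) X ! i)"
      using J(1) assms by (auto simp: prod.If_cases Int_absorb1 intro!: prod.cong)
    finally show ?thesis .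
  qed
  ultimately show ?thesis
    using that J(3) by (simp add: q_sent_def)
qed

lemma card_smooth_support_Diff:
  assumes "length X' = length X"
  shows "real (card (smooth_support P X - smooth_support P X'))
    = card (smooth_support P X) * (1 - (\<Prod>i<length X. overlap P (X ! i) (X' ! i)))"
  using card_Int_Diff[OF finite_smooth_support[of P X], of "smooth_support P X'"]
    card_smooth_support_Int[OF assms] by (simp add: algebra_simps)

lemma card_smooth_support_adv:
  assumes "length X = L" "X' \<in> adv_set S L R X"
  shows "card (smooth_support P X') = card (smooth_support P X)"
  using assms by (intro card_smooth_support_eq) (auto simp: adv_set_def)

lemma card_smooth_support_Diff_adv_le:
  assumes "length X = L" "X' \<in> adv_set S L R X"
  shows "real (card (smooth_support P X - smooth_support P X'))
    \<le> q_sent S P R X * card (smooth_support P X)"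
proof -
  have "real (card (smooth_support P X - smooth_support P X'))
      = card (smooth_support P X) * (1 - (\<Prod>i<L. overlap P (X ! i) (X' ! i)))"
    using card_smooth_support_Diff assms by (simp add: adv_set_def)
  also have "\<dots> \<le> card (smooth_support P X) * q_sent S P R X"
    using prod_overlap_adv_ge[OF assms] by (intro mult_left_mono) auto
  finally show ?thesis
    by (simp add: mult.commute)
qed

lemma g_RS_adv_bounds:
  assumes "length X = L" "X' \<in> adv_set S L R X"
  shows "max (g_RS P L h X c - q_sent S P R X) 0 \<le> g_RS P L h X' c"
    and "g_RS P L h X' c \<le> min (g_RS P L h X c + q_sent S P R X) 1"
proof -
  define B B' where "B = smooth_support P X" and "B' = smooth_support P X'"
  define u v where "u = card {Z \<in> B. h Z = c}" and "v = card {Z \<in> B'. h Z = c}"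
  have N: "card B' = card B" "0 < card B"
    using card_smooth_support_adv[OF assms] card_smooth_support_pos by (simp_all add: B_def B'_def)
  have fin: "finite B" "finite B'"
    by (simp_all add: B_def B'_def finite_smooth_support)
  have "card (B' - B) = card (B - B')"
    using card_Int_Diff[OF fin(1), of B'] card_Int_Diff[OF fin(2), of B] N(1) by (simp add: Int_commute)
  moreover have "real (card (B - B')) \<le> q_sent S P R X * card B"
    using card_smooth_support_Diff_adv_le[OF assms] by (simp add: B_def B'_def)
  ultimately have "real u \<le> real v + q_sent S P R X * card B"
    and "real v \<le> real u + q_sent S P R X * card B"
    using card_filter_le_add_card_Diff[OF fin, of "\<lambda>Z. h Z = c"]
      card_filter_le_add_card_Diff[OF fin(2,1), of "\<lambda>Z. h Z = c"]
    unfolding u_def v_def by linarith+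
  moreover have "v \<le> card B"
    using N(1) fin(2) card_mono[of B' "{Z \<in> B'. h Z = c}"] by (simp add: v_def)
  moreover have "g_RS P L h X c = u / card B" "g_RS P L h X' c = v / card B'"
    using g_RS_eq_card_div[of X L P h c] g_RS_eq_card_div[of X' L P h c] assms
    by (simp_all add: u_def v_def B_def B'_def adv_set_def)
  ultimately show "max (g_RS P L h X c - q_sent S P R X) 0 \<le> g_RS P L h X' c"
    and "g_RS P L h X' c \<le> min (g_RS P L h X c + q_sent S P R X) 1"
    using frequency_shift_bounds[of "card B" v u] N by (simp_all add: mult.commute)
qed

lemma obtain_worst_case_classifier:
  fixes f :: "'w list \<Rightarrow> 'y"
  assumes "length X = L" "yB \<noteq> y"
  obtains fs X' where "X' \<in> adv_set S L R X"
    "g_RS P L fs X y = g_RS P L f X y" "g_RS P L fs X yB = g_RS P L f X yB"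
    "g_RS P L fs X' y = max (g_RS P L fs X y - q_sent S P R X) 0"
    "g_RS P L fs X' yB = min (g_RS P L fs X yB + q_sent S P R X) 1"
proof -
  obtain X' where X': "X' \<in> adv_set S L R X"
    "(\<Prod>i<L. overlap P (X ! i) (X' ! i)) = 1 - q_sent S P R X"
    using obtain_adv_prod_overlap_eq assms(1) by blast
  define B B' where "B = smooth_support P X" and "B' = smooth_support P X'"
  have N: "card B = card B'" "0 < card B"
    using card_smooth_support_adv[OF assms(1) X'(1)] card_smooth_support_pos
    by (simp_all add: B_def B'_def)
  have fin: "finite B" "finite B'"
    by (simp_all add: B_def B'_def finite_smooth_support)
  have d: "real (card (B - B')) = q_sent S P R X * card B"
    using card_smooth_support_Diff X' assms(1) by (simp add: B_def B'_def adv_set_def)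
  have c: "real (card (B \<inter> B')) + real (card (B - B')) = card B"
    using card_Int_Diff[OF fin(1), of B'] by simp
  obtain fs where fs:
    "card {Z \<in> B. fs Z = y} = card {Z \<in> B. f Z = y}"
    "card {Z \<in> B. fs Z = yB} = card {Z \<in> B. f Z = yB}"
    "card {Z \<in> B'. fs Z = y} = card {Z \<in> B. f Z = y} - card (B - B')"
    "card {Z \<in> B'. fs Z = yB} = min (card {Z \<in> B. f Z = yB}) (card (B \<inter> B')) + card (B - B')"
    using obtain_worst_case_relabelling[OF fin N(1) assms(2)[symmetric]] by blast
  have g: "g_RS P L h X c = card {Z \<in> B. h Z = c} / card B"
    "g_RS P L h X' c = card {Z \<in> B'. h Z = c} / card B" for h :: "'w list \<Rightarrow> 'y" and c
    using g_RS_eq_card_div[of X L P h c] g_RS_eq_card_div[of X' L P h c] assms(1) X'(1) N(1)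
    by (simp_all add: B_def B'_def adv_set_def)
  show ?thesis
  proof (rule that[OF X'(1)])
    show "g_RS P L fs X y = g_RS P L f X y" "g_RS P L fs X yB = g_RS P L f X yB"
      using fs(1,2) by (simp_all add: g)
    show "g_RS P L fs X' y = max (g_RS P L fs X y - q_sent S P R X) 0"
      using fs(1,3) divide_truncated_diff[OF _ d] N(2) by (simp add: g)
    show "g_RS P L fs X' yB = min (g_RS P L fs X yB + q_sent S P R X) 1"
      using fs(2,4) divide_saturated_sum[OF _ d c] N(2) by (simp add: g)
  qed
qed

end

theorem theorem2:
  fixes S P :: "'w::finite \<Rightarrow> 'w set"
    and L R :: nat
    and f :: "'w list \<Rightarrow> 'y::finite"
    and X :: "'w list"
    and y yB :: 'y
  assumes syn_refl: "\<And>x. x \<in> S x"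
    and syn_sym: "\<And>x x'. x' \<in> S x \<longleftrightarrow> x \<in> S x'"
    and P_ne: "\<And>x. P x \<noteq> {}"
    and P_card: "\<And>x x'. x' \<in> S x \<Longrightarrow> card (P x) = card (P x')"
    and L_pos: "L \<ge> 1"
    and R_le: "R \<le> L"
    and labels: "card (UNIV :: 'y set) \<ge> 2"
    and X_len: "length X = L"
    and y_max: "\<And>c. g_RS P L f X c \<le> g_RS P L f X y"
    and yB_ne: "yB \<noteq> y"
    and yB_max: "\<And>c. c \<noteq> y \<Longrightarrow> g_RS P L f X c \<le> g_RS P L f X yB"
  shows "\<exists>fs :: 'w list \<Rightarrow> 'y.
           g_RS P L fs X y = g_RS P L f X y \<and>
           g_RS P L fs X yB = g_RS P L f X yB \<and>
           Min ((\<lambda>X'. g_RS P L fs X' y) ` adv_set S L R X)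
             = max (g_RS P L fs X y - q_sent S P R X) 0 \<and>
           Max ((\<lambda>X'. g_RS P L fs X' yB) ` adv_set S L R X)
             = min (g_RS P L fs X yB + q_sent S P R X) 1"
proof -
  interpret perturbation_model S P
    by unfold_locales (fact syn_refl P_ne P_card)+
  obtain fs X' where X': "X' \<in> adv_set S L R X"
    and fs: "g_RS P L fs X y = g_RS P L f X y" "g_RS P L fs X yB = g_RS P L f X yB"
    and worst: "g_RS P L fs X' y = max (g_RS P L fs X y - q_sent S P R X) 0"
      "g_RS P L fs X' yB = min (g_RS P L fs X yB + q_sent S P R X) 1"
    using obtain_worst_case_classifier[OF X_len yB_ne] by blast
  have "Min ((\<lambda>X'. g_RS P L fs X' y) ` adv_set S L R X)
      = max (g_RS P L fs X y - q_sent S P R X) 0"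
    using g_RS_adv_bounds(1)[OF X_len, where h = fs and c = y] worst(1)
      rev_image_eqI[OF X', where f = "\<lambda>X'. g_RS P L fs X' y"]
    by (intro Min_eqI) (auto simp: finite_adv_set)
  moreover have "Max ((\<lambda>X'. g_RS P L fs X' yB) ` adv_set S L R X)
      = min (g_RS P L fs X yB + q_sent S P R X) 1"
    using g_RS_adv_bounds(2)[OF X_len, where h = fs and c = yB] worst(2)
      rev_image_eqI[OF X', where f = "\<lambda>X'. g_RS P L fs X' yB"]
    by (intro Max_eqI) (auto simp: finite_adv_set)
  ultimately show ?thesis
    using fs by blast
qed

end
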